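(* Consider a one-site PTM cascade with $n\ge1$ layers. Fix all rate constants and all total amounts (all positive) except $\overline{S}_i$ for some $i\in\{1,\dots,n\}$. Then, as $\overline{S}_i$ increases, the BMSS values of $S_j^1$, $Y_j^0$ and $Y_j^1$ strictly increase for every $j=i,\dots,n$.
   Context: A one-site PTM cascade with $n$ layers has species $E=S_0^1$ and, for $i=1,\dots,n$, $S_i^0,S_i^1,F_i,Y_i^0,Y_i^1$, with reactions $S_{i-1}^1+S_i^0 \rightleftharpoons Y_i^0 \to S_{i-1}^1+S_i^1$ (rate constants $a_i^0,b_i^0,c_i^0$) and $F_i+S_i^1\rightleftharpoons Y_i^1\to F_i+S_i^0$ (rate constants $a_i^1,b_i^1,c_i^1$), all positive, mass-action kinetics. Put $\delta_i=a_i^1/(b_i^1+c_i^1)$, $\gamma_i=(c_i^1/c_i^0)\delta_i$, $\lambda_i=\frac{b_i^0+c_i^0}{a_i^0}\gamma_i$. Given total amounts $\overline{E},\overline{F}_i,\overline{S}_i$, a steady state is a real solution of: $Y_i^0=\gamma_iF_iS_i^1$, $Y_i^1=\delta_iF_iS_i^1$, $\lambda_iF_iS_i^1=S_i^0S_{i-1}^1$, $\overline{F}_i=F_i+Y_i^1$, $\overline{S}_i=S_i^0+S_i^1+Y_i^0+Y_i^1+Y_{i+1}^0$ ($i=1,\dots,n$, $Y_{n+1}^0:=0$), $\overline{E}=E+Y_1^0$. A BMSS is a steady state with positive total amounts and all concentrations nonnegative; for positive total amounts it exists and is unique. *)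

theory Defs
  imports Complex_Main
begin

text \<open>Indices i = 1..n; the function arguments at
other indices are irrelevant.  Rate constants a0 i, b0 i, c0 i (modification of layer i by
the enzyme S_(i-1)^1) and a1 i, b1 i, c1 i (demodification by F_i).  Concentrations
S0 i = S_i^0, S1 i = S_i^1 (with S1 0 = E), F i, Y0 i = Y_i^0, Y1 i = Y_i^1.\<close>

definition delta :: "(nat \<Rightarrow> real) \<Rightarrow> (nat \<Rightarrow> real) \<Rightarrow> (nat \<Rightarrow> real) \<Rightarrow> nat \<Rightarrow> real" where
  "delta a1 b1 c1 i = a1 i / (b1 i + c1 i)"

definition gamma :: "(nat \<Rightarrow> real) \<Rightarrow> (nat \<Rightarrow> real) \<Rightarrow> (nat \<Rightarrow> real) \<Rightarrow> (nat \<Rightarrow> real) \<Rightarrow> nat \<Rightarrow> real" where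
  "gamma c0 a1 b1 c1 i = (c1 i / c0 i) * delta a1 b1 c1 i"

definition lambda :: "(nat \<Rightarrow> real) \<Rightarrow> (nat \<Rightarrow> real) \<Rightarrow> (nat \<Rightarrow> real) \<Rightarrow> (nat \<Rightarrow> real) \<Rightarrow> (nat \<Rightarrow> real) \<Rightarrow> (nat \<Rightarrow> real) \<Rightarrow> nat \<Rightarrow> real" where
  "lambda a0 b0 c0 a1 b1 c1 i = ((b0 i + c0 i) / a0 i) * gamma c0 a1 b1 c1 i"

definition steady_state ::
  "nat \<Rightarrow> (nat \<Rightarrow> real) \<Rightarrow> (nat \<Rightarrow> real) \<Rightarrow> (nat \<Rightarrow> real) \<Rightarrow> (nat \<Rightarrow> real) \<Rightarrow> (nat \<Rightarrow> real) \<Rightarrow> (nat \<Rightarrow> real)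
   \<Rightarrow> real \<Rightarrow> (nat \<Rightarrow> real) \<Rightarrow> (nat \<Rightarrow> real)
   \<Rightarrow> (nat \<Rightarrow> real) \<Rightarrow> (nat \<Rightarrow> real) \<Rightarrow> (nat \<Rightarrow> real) \<Rightarrow> (nat \<Rightarrow> real) \<Rightarrow> (nat \<Rightarrow> real) \<Rightarrow> bool" where
  "steady_state n a0 b0 c0 a1 b1 c1 Ebar Fbar Sbar S0 S1 F Y0 Y1 \<longleftrightarrow>
     (\<forall>i\<in>{1..n}.
        Y0 i = gamma c0 a1 b1 c1 i * F i * S1 i \<and>
        Y1 i = delta a1 b1 c1 i * F i * S1 i \<and>
        lambda a0 b0 c0 a1 b1 c1 i * F i * S1 i = S0 i * S1 (i - 1) \<and>
        Fbar i = F i + Y1 i \<and>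
        Sbar i = S0 i + S1 i + Y0 i + Y1 i + (if i < n then Y0 (i + 1) else 0)) \<and>
     Ebar = S1 0 + Y0 1"

definition is_BMSS ::
  "nat \<Rightarrow> (nat \<Rightarrow> real) \<Rightarrow> (nat \<Rightarrow> real) \<Rightarrow> (nat \<Rightarrow> real) \<Rightarrow> (nat \<Rightarrow> real) \<Rightarrow> (nat \<Rightarrow> real) \<Rightarrow> (nat \<Rightarrow> real)
   \<Rightarrow> real \<Rightarrow> (nat \<Rightarrow> real) \<Rightarrow> (nat \<Rightarrow> real)
   \<Rightarrow> (nat \<Rightarrow> real) \<Rightarrow> (nat \<Rightarrow> real) \<Rightarrow> (nat \<Rightarrow> real) \<Rightarrow> (nat \<Rightarrow> real) \<Rightarrow> (nat \<Rightarrow> real) \<Rightarrow> bool" where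
  "is_BMSS n a0 b0 c0 a1 b1 c1 Ebar Fbar Sbar S0 S1 F Y0 Y1 \<longleftrightarrow>
     steady_state n a0 b0 c0 a1 b1 c1 Ebar Fbar Sbar S0 S1 F Y0 Y1 \<and>
     Ebar > 0 \<and> (\<forall>i\<in>{1..n}. Fbar i > 0 \<and> Sbar i > 0) \<and>
     S1 0 \<ge> 0 \<and>
     (\<forall>i\<in>{1..n}. S0 i \<ge> 0 \<and> S1 i \<ge> 0 \<and> F i \<ge> 0 \<and> Y0 i \<ge> 0 \<and> Y1 i \<ge> 0)"

end

theory Submission
  imports Defs
begin

(* Compare two BMSS X, X' of the same cascade and write d_k = S1'_k - S1_k,
   s_k = Sbar'_k - Sbar_k.  The proof separates physics from order reasoning.

   Physics (locale cascade): the complex F_k S1_k is a strictly increasing function of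
   S1_k (Fbar_k fixed), so it moves in the direction of d_k; by the conservation law
   E = S1_0 + gamma_1 F_1 S1_1 the enzyme moves against layer 1; and each layer is rigid:
   if its total weakly grows while S1_k and S1_(k+1) weakly shrink and the modifying
   enzyme S1_(k-1) weakly grows, nothing changed at all.  Rigidity holds for (X, X')
   and for (X', X), i.e. for (s, d) and for (-s, -d).

   Order reasoning (cascade_sign_pattern): with s_k = 0 for k <> i, rigidity forces
   sgn d_k = sgn d_(k-1) below layer i and sgn d_k = - sgn d_(k+1) above it; layer i,
   whose total strictly grows, then cannot have d_i <= 0.  So d_j > 0 for all j >= i,
   and Y0_j, Y1_j, being positive multiples of F_j S1_j, increase as well. *)

lemma same_sign_iff:
  fixes a b :: real
  assumes "sgn a = sgn b"
  shows "a \<le> 0 \<longleftrightarrow> b \<le> 0" "a = 0 \<longleftrightarrow> b = 0" "0 < a \<longleftrightarrow> 0 < b"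
  using assms by (auto simp: sgn_if split: if_splits)

(* With F (1 + dl x) = Fb fixed, the complex F x = Fb x / (1 + dl x) is strictly
   increasing in x >= 0; stated as equality of signs of the two changes. *)
lemma saturation_sign:
  fixes F F' x x' dl Fb :: real
  assumes "Fb = F * (1 + dl * x)" "Fb = F' * (1 + dl * x')"
    and "0 < dl" "0 \<le> x" "0 \<le> x'" "0 < Fb"
  shows "sgn (F' * x' - F * x) = sgn (x' - x)"
proof -
  have identity: "(F' * x' - F * x) * ((1 + dl * x) * (1 + dl * x')) = Fb * (x' - x)"
  proof -
    have "F * (1 + dl * x) = Fb" "F' * (1 + dl * x') = Fb" using assms(1,2) by simp_all
    moreover have "(F' * x' - F * x) * ((1 + dl * x) * (1 + dl * x'))
        = (F' * (1 + dl * x')) * x' * (1 + dl * x) - (F * (1 + dl * x)) * x * (1 + dl * x')"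
      by (simp add: algebra_simps)
    ultimately show ?thesis by (simp add: algebra_simps)
  qed
  have "0 < (1 + dl * x) * (1 + dl * x')"
    using assms(3-5) by (simp add: add_pos_nonneg)
  then have "sgn ((1 + dl * x) * (1 + dl * x')) = 1" by simp
  then have "sgn (F' * x' - F * x) = sgn ((F' * x' - F * x) * ((1 + dl * x) * (1 + dl * x')))"
    by (simp only: sgn_mult mult_1_right)
  also have "\<dots> = sgn (x' - x)"
    unfolding identity using assms(6) by (simp add: sgn_mult)
  finally show ?thesis .
qed

(* One layer as a balance: total Sb = free S0 + modified x + complexes c P + downstream T,
   with l P = S0 y for the enzyme y.  If the total weakly grows while x, P, T weakly shrink
   and y weakly grows, then the free form must grow, which makes P grow unless nothing
   changed. *)
lemma layer_balance_rigid:
  fixes l c Sb Sb' S0 S0' x x' P P' T T' y y' :: real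
  assumes "0 < l" "0 \<le> c" "0 < S0" "0 < y"
    and "Sb = S0 + x + c * P + T" "Sb' = S0' + x' + c * P' + T'"
    and "l * P = S0 * y" "l * P' = S0' * y'"
    and "Sb \<le> Sb'" "x' \<le> x" "P' \<le> P" "T' \<le> T" "y \<le> y'"
  shows "Sb = Sb' \<and> x' = x \<and> T' = T \<and> y' = y"
proof -
  have cP: "c * P' \<le> c * P" using assms(2,11) by (simp add: mult_left_mono)
  then have S0_le: "S0 \<le> S0'" using assms(5,6,9,10,12) by linarith
  have "S0' * y' = l * P'" using assms(8) by simp
  also have "\<dots> \<le> l * P" using assms(1,11) by simp
  also have "\<dots> = S0 * y" by (fact assms(7))
  finally have "S0' * y' \<le> S0 * y" .
  moreover have "S0 * y \<le> S0' * y" using S0_le assms(4) by simp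
  moreover have "S0' * y \<le> S0' * y'" using S0_le assms(3,13) by simp
  ultimately have "S0 * y = S0' * y" "S0' * y = S0' * y'" by linarith+
  then have "S0' = S0" "y' = y" using assms(3,4) S0_le by auto
  then show ?thesis using assms(5,6,9,10,12) cP by linarith
qed

(* Rigidity of layer k for the changes s (of the totals) and d (of the modified forms). *)
definition rigid_layer :: "nat \<Rightarrow> (nat \<Rightarrow> real) \<Rightarrow> (nat \<Rightarrow> real) \<Rightarrow> nat \<Rightarrow> bool" where
  "rigid_layer n s d k \<longleftrightarrow>
     (0 \<le> s k \<and> d k \<le> 0 \<and> (k < n \<longrightarrow> d (k + 1) \<le> 0) \<and> 0 \<le> d (k - 1) \<longrightarrow>
        s k = 0 \<and> d k = 0 \<and> (k < n \<longrightarrow> d (k + 1) = 0) \<and> d (k - 1) = 0)"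

lemma sign_down_step:
  fixes s d :: "nat \<Rightarrow> real"
  assumes "rigid_layer n s d k" "rigid_layer n (\<lambda>j. - s j) (\<lambda>j. - d j) k" "s k = 0"
    and "k < n \<Longrightarrow> sgn (d (k + 1)) = sgn (d k)"
  shows "sgn (d (k - 1)) = sgn (d k)"
  using assms unfolding rigid_layer_def sgn_if by (cases "k < n") (auto split: if_splits)

lemma sign_up_step:
  fixes s d :: "nat \<Rightarrow> real"
  assumes "rigid_layer n s d k" "rigid_layer n (\<lambda>j. - s j) (\<lambda>j. - d j) k" "s k = 0"
    and "k < n" "sgn (d (k - 1)) = - sgn (d k)"
  shows "sgn (d k) = - sgn (d (k + 1))"
  using assms unfolding rigid_layer_def sgn_if by (auto split: if_splits)

lemma sign_pivot:
  fixes s d :: "nat \<Rightarrow> real"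
  assumes "rigid_layer n s d k" "0 < s k"
    and "k < n \<Longrightarrow> sgn (d (k + 1)) = sgn (d k)" "sgn (d (k - 1)) = - sgn (d k)"
  shows "0 < d k"
  using assms unfolding rigid_layer_def sgn_if by (cases "k < n") (auto split: if_splits)

lemma downstream_signs:
  fixes s d :: "nat \<Rightarrow> real"
  assumes rigid: "\<And>k. k \<in> {m<..n} \<Longrightarrow> rigid_layer n s d k \<and> rigid_layer n (\<lambda>j. - s j) (\<lambda>j. - d j) k"
    and fixed: "\<And>k. k \<in> {m<..n} \<Longrightarrow> s k = 0"
    and k: "k \<in> {m<..n}"
  shows "sgn (d (k - 1)) = sgn (d k)"
proof -
  from k have "k \<le> n" by simp
  then show ?thesis
  proof (induction rule: inc_induct)
    case base
    show ?case using rigid[of n] fixed[of n] k by (intro sign_down_step[of n s d]) auto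
  next
    case (step j)
    have "j \<in> {m<..n}" using step.hyps k by auto
    then show ?case
      using rigid[of j] fixed[of j] step.IH step.hyps by (intro sign_down_step[of n s d]) auto
  qed
qed

lemma upstream_signs:
  fixes s d :: "nat \<Rightarrow> real"
  assumes enzyme: "sgn (d 0) = - sgn (d 1)"
    and rigid: "\<And>k. k \<in> {1..<m} \<Longrightarrow> rigid_layer n s d k \<and> rigid_layer n (\<lambda>j. - s j) (\<lambda>j. - d j) k"
    and fixed: "\<And>k. k \<in> {1..<m} \<Longrightarrow> s k = 0"
    and "m \<le> n" "k < m"
  shows "sgn (d k) = - sgn (d (k + 1))"
  using \<open>k < m\<close>
proof (induction k)
  case 0
  show ?case using enzyme by simp
next
  case (Suc k)
  have "Suc k \<in> {1..<m}" using Suc.prems by simp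
  then show ?case
    using rigid[of "Suc k"] fixed[of "Suc k"] Suc.IH Suc.prems \<open>m \<le> n\<close>
    by (intro sign_up_step[of n s d]) auto
qed

lemma cascade_sign_pattern:
  fixes s d :: "nat \<Rightarrow> real"
  assumes i: "i \<in> {1..n}"
    and enzyme: "sgn (d 0) = - sgn (d 1)"
    and rigid: "\<And>k. k \<in> {1..n} \<Longrightarrow> rigid_layer n s d k \<and> rigid_layer n (\<lambda>j. - s j) (\<lambda>j. - d j) k"
    and fixed: "\<And>k. k \<in> {1..n} \<Longrightarrow> k \<noteq> i \<Longrightarrow> s k = 0"
    and grows: "0 < s i"
    and j: "j \<in> {i..n}"
  shows "0 < d j"
proof -
  have down: "sgn (d (k - 1)) = sgn (d k)" if "k \<in> {i<..n}" for k
    using rigid fixed i that by (intro downstream_signs[of i n s d]) auto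
  have up: "sgn (d (i - 1)) = - sgn (d i)"
    using upstream_signs[of d i n s "i - 1", OF enzyme] rigid fixed i by auto
  have "0 < d i"
    using rigid[OF i] grows up down[of "i + 1"] by (intro sign_pivot[of n s d i]) auto
  from j have "i \<le> j" "j \<le> n" by auto
  then show ?thesis
  proof (induction rule: dec_induct)
    case base
    show ?case by fact
  next
    case (step k)
    then have "0 < d k" "sgn (d k) = sgn (d (Suc k))" using down[of "Suc k"] by simp_all
    then show ?case by (metis sgn_greater)
  qed
qed

locale cascade =
  fixes n :: nat and a0 b0 c0 a1 b1 c1 :: "nat \<Rightarrow> real"
    and Ebar :: real and Fbar :: "nat \<Rightarrow> real"
  assumes layers: "1 \<le> n"
    and rates_pos: "\<forall>k\<in>{1..n}. a0 k > 0 \<and> b0 k > 0 \<and> c0 k > 0 \<and> a1 k > 0 \<and> b1 k > 0 \<and> c1 k > 0"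
begin

abbreviation "gam \<equiv> gamma c0 a1 b1 c1"
abbreviation "dlt \<equiv> delta a1 b1 c1"
abbreviation "lam \<equiv> lambda a0 b0 c0 a1 b1 c1"
abbreviation "BMSS \<equiv> is_BMSS n a0 b0 c0 a1 b1 c1 Ebar Fbar"

lemma coefficients_pos:
  assumes "k \<in> {1..n}"
  shows "0 < gam k" "0 < dlt k" "0 < lam k"
proof -
  have "0 < a0 k" "0 < b0 k" "0 < c0 k" "0 < a1 k" "0 < b1 k" "0 < c1 k"
    using rates_pos assms by auto
  then show "0 < gam k" "0 < dlt k" "0 < lam k"
    by (simp_all add: gamma_def delta_def lambda_def)
qed

lemma bmss_layer:
  assumes X: "BMSS Sbar S0 S1 F Y0 Y1" and k: "k \<in> {1..n}"
  shows "Y0 k = gam k * (F k * S1 k)"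
    and "Y1 k = dlt k * (F k * S1 k)"
    and "lam k * (F k * S1 k) = S0 k * S1 (k - 1)"
    and "Fbar k = F k * (1 + dlt k * S1 k)"
    and "Sbar k = S0 k + S1 k + (gam k + dlt k) * (F k * S1 k)
                 + (if k < n then gam (k + 1) * (F (k + 1) * S1 (k + 1)) else 0)"
proof -
  have eq: "Y0 j = gam j * F j * S1 j \<and> Y1 j = dlt j * F j * S1 j
      \<and> lam j * F j * S1 j = S0 j * S1 (j - 1) \<and> Fbar j = F j + Y1 j
      \<and> Sbar j = S0 j + S1 j + Y0 j + Y1 j + (if j < n then Y0 (j + 1) else 0)"
    if "j \<in> {1..n}" for j
    using X that unfolding is_BMSS_def steady_state_def by blast
  from eq[OF k] show "Y0 k = gam k * (F k * S1 k)" "Y1 k = dlt k * (F k * S1 k)"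
      "lam k * (F k * S1 k) = S0 k * S1 (k - 1)" "Fbar k = F k * (1 + dlt k * S1 k)"
    by (simp_all add: algebra_simps)
  have "(if k < n then Y0 (k + 1) else 0)
      = (if k < n then gam (k + 1) * (F (k + 1) * S1 (k + 1)) else 0)"
    using eq[of "k + 1"] k by (auto simp: mult.assoc)
  with eq[OF k] show "Sbar k = S0 k + S1 k + (gam k + dlt k) * (F k * S1 k)
                 + (if k < n then gam (k + 1) * (F (k + 1) * S1 (k + 1)) else 0)"
    by (simp add: algebra_simps)
qed

lemma bmss_enzyme:
  assumes "BMSS Sbar S0 S1 F Y0 Y1"
  shows "Ebar = S1 0 + gam 1 * (F 1 * S1 1)"
  using assms bmss_layer(1)[OF assms] layers unfolding is_BMSS_def steady_state_def by auto

lemma bmss_signs: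
  assumes "BMSS Sbar S0 S1 F Y0 Y1"
  shows "0 < Ebar" "0 \<le> S1 0"
    and "k \<in> {1..n} \<Longrightarrow> 0 < Fbar k \<and> 0 < Sbar k \<and> 0 \<le> S0 k \<and> 0 \<le> S1 k \<and> 0 \<le> F k"
  using assms unfolding is_BMSS_def by auto

(* The demodifying enzyme is never exhausted, since Fbar k = F k (1 + delta_k S1 k) > 0. *)
lemma bmss_F_pos:
  assumes X: "BMSS Sbar S0 S1 F Y0 Y1" and k: "k \<in> {1..n}"
  shows "0 < F k"
proof -
  have "0 < F k * (1 + dlt k * S1 k)" using bmss_layer(4)[OF X k] bmss_signs(3)[OF X k] by simp
  moreover have "0 \<le> F k" "0 < 1 + dlt k * S1 k"
    using bmss_signs(3)[OF X k] coefficients_pos[OF k] by (auto simp: add_pos_nonneg)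
  ultimately show ?thesis by (simp add: zero_less_mult_iff)
qed

lemma bmss_S1_zero_propagates:
  assumes X: "BMSS Sbar S0 S1 F Y0 Y1" and k: "k \<in> {1..n}" and "S1 (k - 1) = 0"
  shows "S1 k = 0"
  using bmss_layer(3)[OF X k] assms(3) coefficients_pos[OF k] bmss_F_pos[OF X k] by simp

(* Every modified form is present: if S1 k vanished with S1 (k-1) > 0, then S0 k, the
   complexes of layer k and, by propagation, those of layer k+1 would vanish, leaving
   Sbar k = 0; for k = 0 the same argument uses Ebar > 0. *)
lemma bmss_S1_pos:
  assumes X: "BMSS Sbar S0 S1 F Y0 Y1" and "k \<le> n"
  shows "0 < S1 k"
  using \<open>k \<le> n\<close>
proof (induction k)
  case 0
  show ?case
  proof (rule ccontr)
    assume "\<not> 0 < S1 0"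
    then have "S1 0 = 0" using bmss_signs(2)[OF X] by simp
    then have "S1 1 = 0" using bmss_S1_zero_propagates[OF X, of 1] layers by simp
    then show False using bmss_enzyme[OF X] bmss_signs(1)[OF X] \<open>S1 0 = 0\<close> by simp
  qed
next
  case (Suc k)
  define j where "j = Suc k"
  have j: "j \<in> {1..n}" and prev: "0 < S1 (j - 1)" using Suc unfolding j_def by auto
  show ?case unfolding j_def[symmetric]
  proof (rule ccontr)
    assume "\<not> 0 < S1 j"
    then have zero: "S1 j = 0" using bmss_signs(3)[OF X j] by simp
    then have "S0 j * S1 (j - 1) = 0" using bmss_layer(3)[OF X j] by simp
    then have "S0 j = 0" using prev by simp
    moreover have "j < n \<Longrightarrow> S1 (j + 1) = 0"
      using bmss_S1_zero_propagates[OF X, of "j + 1"] zero by simp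
    ultimately have "Sbar j = 0" using bmss_layer(5)[OF X j] zero by simp
    then show False using bmss_signs(3)[OF X j] by simp
  qed
qed

(* Every free form is present, by lambda_k F k S1 k = S0 k S1 (k-1). *)
lemma bmss_S0_pos:
  assumes X: "BMSS Sbar S0 S1 F Y0 Y1" and k: "k \<in> {1..n}"
  shows "0 < S0 k"
proof -
  have "0 < lam k * (F k * S1 k)"
    using coefficients_pos[OF k] bmss_F_pos[OF X k] bmss_S1_pos[OF X, of k] k by simp
  then have "0 < S0 k * S1 (k - 1)" using bmss_layer(3)[OF X k] by simp
  moreover have "0 < S1 (k - 1)" using bmss_S1_pos[OF X, of "k - 1"] k by auto
  ultimately show ?thesis by (simp add: zero_less_mult_iff)
qed

lemma complex_sign:
  assumes X: "BMSS Sbar S0 S1 F Y0 Y1" and X': "BMSS Sbar' S0' S1' F' Y0' Y1'"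
    and k: "k \<in> {1..n}"
  shows "sgn (F' k * S1' k - F k * S1 k) = sgn (S1' k - S1 k)"
  using bmss_signs(3)[OF X k] bmss_signs(3)[OF X' k] coefficients_pos(2)[OF k]
  by (intro saturation_sign[OF bmss_layer(4)[OF X k] bmss_layer(4)[OF X' k]]) auto

(* Conservation of E makes the enzyme move against layer 1. *)
lemma enzyme_sign:
  assumes X: "BMSS Sbar S0 S1 F Y0 Y1" and X': "BMSS Sbar' S0' S1' F' Y0' Y1'"
  shows "sgn (S1' 0 - S1 0) = - sgn (S1' 1 - S1 1)"
proof -
  have one: "1 \<in> {1..n}" using layers by simp
  have "S1' 0 - S1 0 = - (gam 1 * (F' 1 * S1' 1 - F 1 * S1 1))"
    using bmss_enzyme[OF X] bmss_enzyme[OF X'] by (simp add: algebra_simps)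
  then have "sgn (S1' 0 - S1 0) = - sgn (F' 1 * S1' 1 - F 1 * S1 1)"
    using coefficients_pos(1)[OF one] by (simp add: sgn_mult)
  with complex_sign[OF X X' one] show ?thesis by simp
qed

lemma layer_rigid:
  assumes X: "BMSS Sbar S0 S1 F Y0 Y1" and X': "BMSS Sbar' S0' S1' F' Y0' Y1'"
    and k: "k \<in> {1..n}"
  shows "rigid_layer n (\<lambda>j. Sbar' j - Sbar j) (\<lambda>j. S1' j - S1 j) k"
  unfolding rigid_layer_def
proof (intro impI)
  assume "0 \<le> Sbar' k - Sbar k \<and> S1' k - S1 k \<le> 0
    \<and> (k < n \<longrightarrow> S1' (k + 1) - S1 (k + 1) \<le> 0) \<and> 0 \<le> S1' (k - 1) - S1 (k - 1)"
  then have Sbar_le: "Sbar k \<le> Sbar' k" and S1_le: "S1' k \<le> S1 k"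
    and next_le: "k < n \<Longrightarrow> S1' (k + 1) \<le> S1 (k + 1)" and enzyme_le: "S1 (k - 1) \<le> S1' (k - 1)"
    by auto
  define T where "T = (if k < n then gam (k + 1) * (F (k + 1) * S1 (k + 1)) else 0)"
  define T' where "T' = (if k < n then gam (k + 1) * (F' (k + 1) * S1' (k + 1)) else 0)"
  have next_sign: "sgn (F' (k + 1) * S1' (k + 1) - F (k + 1) * S1 (k + 1)) = sgn (S1' (k + 1) - S1 (k + 1))"
    if "k < n" using complex_sign[OF X X', of "k + 1"] that by simp
  have P_le: "F' k * S1' k \<le> F k * S1 k"
    using same_sign_iff(1)[OF complex_sign[OF X X' k]] S1_le by simp
  have T_le: "T' \<le> T"
  proof (cases "k < n")
    case True
    then have "F' (k + 1) * S1' (k + 1) \<le> F (k + 1) * S1 (k + 1)"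
      using same_sign_iff(1)[OF next_sign] next_le by simp
    then show ?thesis
      using True coefficients_pos(1)[of "k + 1"] unfolding T_def T'_def by simp
  qed (simp add: T_def T'_def)
  have "Sbar k = Sbar' k \<and> S1' k = S1 k \<and> T' = T \<and> S1' (k - 1) = S1 (k - 1)"
    using coefficients_pos[OF k] bmss_S0_pos[OF X k] bmss_S1_pos[OF X, of "k - 1"] k
    by (intro layer_balance_rigid[OF _ _ _ _ bmss_layer(5)[OF X k, folded T_def]
          bmss_layer(5)[OF X' k, folded T'_def] bmss_layer(3)[OF X k] bmss_layer(3)[OF X' k]
          Sbar_le S1_le P_le T_le enzyme_le]) auto
  moreover have "S1' (k + 1) = S1 (k + 1)" if "k < n" "T' = T"
  proof -
    have "F' (k + 1) * S1' (k + 1) = F (k + 1) * S1 (k + 1)"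
      using that coefficients_pos(1)[of "k + 1"] unfolding T_def T'_def by simp
    then show ?thesis using same_sign_iff(2)[OF next_sign[OF \<open>k < n\<close>]] by simp
  qed
  ultimately show "Sbar' k - Sbar k = 0 \<and> S1' k - S1 k = 0
    \<and> (k < n \<longrightarrow> S1' (k + 1) - S1 (k + 1) = 0) \<and> S1' (k - 1) - S1 (k - 1) = 0"
    by simp
qed

end

theorem mainTheorem7:
  fixes n i :: nat
    and a0 b0 c0 a1 b1 c1 :: "nat \<Rightarrow> real"
    and Ebar :: real and Fbar Sbar Sbar' :: "nat \<Rightarrow> real"
    and S0 S1 F Y0 Y1 S0' S1' F' Y0' Y1' :: "nat \<Rightarrow> real"
  assumes "n \<ge> 1" and "i \<in> {1..n}"
    and "\<forall>k\<in>{1..n}. a0 k > 0 \<and> b0 k > 0 \<and> c0 k > 0 \<and> a1 k > 0 \<and> b1 k > 0 \<and> c1 k > 0"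
    and "\<forall>k\<in>{1..n}. k \<noteq> i \<longrightarrow> Sbar' k = Sbar k"
    and "Sbar i < Sbar' i"
    and "is_BMSS n a0 b0 c0 a1 b1 c1 Ebar Fbar Sbar S0 S1 F Y0 Y1"
    and "is_BMSS n a0 b0 c0 a1 b1 c1 Ebar Fbar Sbar' S0' S1' F' Y0' Y1'"
  shows "\<forall>j\<in>{i..n}. S1 j < S1' j \<and> Y0 j < Y0' j \<and> Y1 j < Y1' j"
proof
  interpret cascade n a0 b0 c0 a1 b1 c1 Ebar Fbar
    using assms(1,3) by unfold_locales
  note X = assms(6) and X' = assms(7)
  have rigid: "rigid_layer n (\<lambda>j. Sbar' j - Sbar j) (\<lambda>j. S1' j - S1 j) k
      \<and> rigid_layer n (\<lambda>j. - (Sbar' j - Sbar j)) (\<lambda>j. - (S1' j - S1 j)) k"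
    if "k \<in> {1..n}" for k
    using layer_rigid[OF X X' that] layer_rigid[OF X' X that] by simp
  fix j assume j: "j \<in> {i..n}"
  then have j_layer: "j \<in> {1..n}" using assms(2) by auto
  have "0 < S1' j - S1 j"
    using assms(2,4,5) by (intro cascade_sign_pattern[OF assms(2) enzyme_sign[OF X X'] rigid _ _ j]) auto
  moreover have "0 < F' j * S1' j - F j * S1 j"
    using calculation same_sign_iff(3)[OF complex_sign[OF X X' j_layer]] by simp
  ultimately show "S1 j < S1' j \<and> Y0 j < Y0' j \<and> Y1 j < Y1' j"
    using bmss_layer(1,2)[OF X j_layer] bmss_layer(1,2)[OF X' j_layer] coefficients_pos[OF j_layer]
    by (simp add: algebra_simps)
qed

end
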